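(* Let $0<\alpha<1$, and let $r,\beta$ satisfy $\alpha<\beta<1$ and $r\beta\ge1$. Let $H:\mathbb{R}^2\to\mathbb{R}^2$ (identifying $\mathbb C\cong\mathbb{R}^2$, written $H(f,\bar f)$) be Hölder continuous with exponent $\beta$, $C^1$ away from the origin, with $|H(f,\bar f)|\approx|f|^\beta$ and $|H'(f,\bar f)|\approx|f|^{\beta-1}$. Let $\epsilon>0$ with $\epsilon\ll1-\beta$. Then $$\|H(f,\bar f)\,g(|f|)\|_{\dot B^{\alpha}_{r,r}}\lesssim\|f\|^{\beta}_{\dot B^{\alpha/\beta}_{\beta r,\beta r}}+\|f\|^{\beta+\epsilon}_{\dot B^{\alpha/(\beta+\epsilon)}_{(\beta+\epsilon)r,(\beta+\epsilon)r}}.$$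
   Context: $g(s):=\log^{\gamma}(\log(10+s^2))$, $\gamma>0$. For $0<s<1$ and $p\ge1$, the homogeneous Besov norm on $\mathbb{R}^n$ is (up to equivalence) $\|f\|^p_{\dot B^s_{p,p}}=\int_{\mathbb{R}^n}\frac{\|f(\cdot+h)-f\|^p_{L^p}}{|h|^{n+sp}}\,dh$. *)

theory Defs
  imports "HOL-Analysis.Analysis"
begin

definition loglog_weight :: "real \<Rightarrow> real \<Rightarrow> real" where
  "loglog_weight \<gamma> s = (ln (ln (10 + s\<^sup>2))) powr \<gamma>"

definition enn_powr :: "ennreal \<Rightarrow> real \<Rightarrow> ennreal" where
  "enn_powr x q = (if x = \<infinity> then \<infinity> else ennreal (enn2real x powr q))"

text \<open>The p-th power of the homogeneous Besov seminorm of order s, indices (p,p), on R^n: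
  integral over h of ||f(.+h) - f||_p^p / |h|^(n+sp).\<close>
definition besov_pow :: "real \<Rightarrow> real \<Rightarrow> ('n::euclidean_space \<Rightarrow> complex) \<Rightarrow> ennreal" where
  "besov_pow s p f =
     (\<integral>\<^sup>+ h. (\<integral>\<^sup>+ x. ennreal (cmod (f (x + h) - f x) powr p) \<partial>lborel)
              / ennreal (norm h powr (real DIM('n) + s * p)) \<partial>lborel)"

definition besov_norm :: "real \<Rightarrow> real \<Rightarrow> ('n::euclidean_space \<Rightarrow> complex) \<Rightarrow> ennreal" where
  "besov_norm s p f = enn_powr (besov_pow s p f) (1 / p)"

end

theory Submission
  imports Defs
begin

text \<open>Write F(z) = H(z) g(|z|). The heart of the matter is the pointwise estimate
  |F(a) - F(b)| \<lesssim> |a - b|^\<beta> + |a - b|^(\<beta>+\<epsilon>), where the extra power \<epsilon> absorbs the slow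
  growth g(s) \<lesssim> 1 + s^\<epsilon> of the weight. If |b| \<le> |a| \<le> 2|a - b|, both values are bounded by
  size. Otherwise |z| is comparable to |a| on the segment from b to a, and the mean value theorem
  for H and g bounds the difference by |a - b| |a|^(\<beta>-1) (1 + |a|^\<epsilon>), which is at most
  |a - b|^\<beta> + |a - b|^(\<beta>+\<epsilon>) because |a - b| \<le> |a| and \<beta> + \<epsilon> \<le> 1. Raising this to the power r
  and integrating gives the Besov estimate, since \<alpha> r = (\<alpha>/\<beta>)(\<beta> r) = (\<alpha>/(\<beta>+\<epsilon>))((\<beta>+\<epsilon>) r).\<close>

lemma ln_10_plus_sq_gt_one: "1 < ln (10 + s\<^sup>2 :: real)"
proof -
  have "exp 1 < (10::real)" using exp_le by linarith
  also have "\<dots> \<le> 10 + s\<^sup>2" by simp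
  finally have "ln (exp 1) < ln (10 + s\<^sup>2)"
    by (subst ln_less_cancel_iff) (simp_all add: add_pos_nonneg)
  then show ?thesis by simp
qed

lemma ln_ln_10_plus_sq_bounds:
  fixes s :: real
  shows "0 < ln (ln (10 + s\<^sup>2))" "ln (ln (10 + s\<^sup>2)) \<le> ln (10 + s\<^sup>2)"
    "ln (ln 10) \<le> ln (ln (10 + s\<^sup>2))"
proof -
  show "0 < ln (ln (10 + s\<^sup>2))" using ln_10_plus_sq_gt_one[of s] by simp
  show "ln (ln (10 + s\<^sup>2)) \<le> ln (10 + s\<^sup>2)"
    using ln_10_plus_sq_gt_one[of s] ln_le_minus_one[of "ln (10 + s\<^sup>2)"] by linarith
  have "ln 10 \<le> ln (10 + s\<^sup>2)" by (subst ln_le_cancel_iff) (simp_all add: add_pos_nonneg)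
  then show "ln (ln 10) \<le> ln (ln (10 + s\<^sup>2))"
    using ln_10_plus_sq_gt_one[of 0] by simp
qed

lemma ln_10_plus_sq_powr_le:
  fixes q \<epsilon> :: real
  assumes q: "0 < q" and \<epsilon>: "0 < \<epsilon>"
  shows "\<exists>K>0. \<forall>s\<ge>0. ln (10 + s\<^sup>2) powr q \<le> K * (1 + s powr \<epsilon>)"
proof -
  define \<delta> where "\<delta> = \<epsilon> / (2 * q)"
  have \<delta>: "0 < \<delta>" using q \<epsilon> by (simp add: \<delta>_def)
  define K where "K = (1 / \<delta>) powr q * 11 powr (\<epsilon> / 2)"
  have "ln (10 + s\<^sup>2) powr q \<le> K * (1 + s powr \<epsilon>)" if s: "0 \<le> s" for s
  proof -
    let ?y = "10 + s\<^sup>2"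
    have y_powr_le: "?y powr (\<epsilon> / 2) \<le> 11 powr (\<epsilon> / 2) * (1 + s powr \<epsilon>)"
    proof (cases "s \<le> 1")
      case True
      then have "s\<^sup>2 \<le> 1" using s by (simp add: power_le_one)
      then have "?y powr (\<epsilon> / 2) \<le> 11 powr (\<epsilon> / 2)" using \<epsilon> by (intro powr_mono2) auto
      then show ?thesis by (smt (verit) mult_le_cancel_left1 powr_ge_zero)
    next
      case False
      then have "?y \<le> 11 * s\<^sup>2" by (simp add: power2_eq_square) (smt (verit) mult_le_cancel_left1)
      then have "?y powr (\<epsilon> / 2) \<le> (11 * s\<^sup>2) powr (\<epsilon> / 2)" using \<epsilon> by (intro powr_mono2) auto
      also have "\<dots> = 11 powr (\<epsilon> / 2) * s powr \<epsilon>"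
        using False by (simp add: powr_mult powr_powr flip: powr_numeral)
      finally show ?thesis by (smt (verit) mult_left_mono powr_ge_zero)
    qed
    have "ln ?y powr q \<le> (?y powr \<delta> / \<delta>) powr q"
      using ln_powr_bound[of ?y \<delta>] \<delta> q ln_10_plus_sq_gt_one[of s] by (intro powr_mono2) auto
    also have "\<dots> = (1 / \<delta>) powr q * (?y powr \<delta>) powr q"
      using \<delta> by (simp add: powr_divide)
    also have "(?y powr \<delta>) powr q = ?y powr (\<epsilon> / 2)"
      using q by (simp add: powr_powr \<delta>_def)
    also have "(1 / \<delta>) powr q * ?y powr (\<epsilon> / 2) \<le> K * (1 + s powr \<epsilon>)"
      unfolding K_def mult.assoc by (rule mult_left_mono[OF y_powr_le]) simp
    finally show ?thesis .
  qed
  moreover have "0 < K" using \<delta> by (simp add: K_def)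
  ultimately show ?thesis by blast
qed

lemma loglog_weight_nonneg: "0 \<le> loglog_weight \<gamma> s"
  by (simp add: loglog_weight_def)

lemma loglog_weight_le:
  assumes "0 < \<gamma>" "0 < \<epsilon>"
  shows "\<exists>K>0. \<forall>s\<ge>0. loglog_weight \<gamma> s \<le> K * (1 + s powr \<epsilon>)"
proof -
  obtain K where K: "0 < K" "\<forall>s\<ge>0. ln (10 + s\<^sup>2) powr \<gamma> \<le> K * (1 + s powr \<epsilon>)"
    using ln_10_plus_sq_powr_le[OF assms] by blast
  have "loglog_weight \<gamma> s \<le> ln (10 + s\<^sup>2) powr \<gamma>" for s
    unfolding loglog_weight_def
    using ln_ln_10_plus_sq_bounds[of s] ln_10_plus_sq_gt_one[of s] assms
    by (intro powr_mono2) auto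
  with K show ?thesis by (meson order_trans)
qed

definition loglog_weight_deriv :: "real \<Rightarrow> real \<Rightarrow> real" where
  "loglog_weight_deriv \<gamma> s =
     \<gamma> * ln (ln (10 + s\<^sup>2)) powr (\<gamma> - 1) * (1 / ln (10 + s\<^sup>2)) * (2 * s / (10 + s\<^sup>2))"

lemma loglog_weight_has_real_derivative:
  "(loglog_weight \<gamma> has_real_derivative loglog_weight_deriv \<gamma> s) (at s)"
proof -
  have "loglog_weight \<gamma> = (\<lambda>s. ln (ln (10 + s\<^sup>2)) powr \<gamma>)"
    by (simp add: loglog_weight_def fun_eq_iff)
  moreover have "0 < 9 + s\<^sup>2" by (simp add: add_pos_nonneg)
  ultimately show ?thesis
    unfolding loglog_weight_deriv_def
    using ln_10_plus_sq_gt_one[of s] ln_ln_10_plus_sq_bounds(1)[of s]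
    by (auto intro!: derivative_eq_intros simp: field_simps)
qed

lemma abs_loglog_weight_deriv_mult_le:
  assumes \<gamma>: "0 \<le> \<gamma>" and "0 < s"
  shows "\<bar>loglog_weight_deriv \<gamma> s\<bar> * s \<le> 2 * \<gamma> * ln (ln (10 + s\<^sup>2)) powr (\<gamma> - 1)"
proof -
  let ?X = "ln (10 + s\<^sup>2)" and ?L = "ln (ln (10 + s\<^sup>2))"
  have X: "1 < ?X" "0 < ?L"
    using ln_10_plus_sq_gt_one[of s] ln_ln_10_plus_sq_bounds(1)[of s] by auto
  have pos: "0 < 10 + s\<^sup>2" "0 < 9 + s\<^sup>2" by (simp_all add: add_pos_nonneg)
  have "(1 / ?X) * (2 * s\<^sup>2 / (10 + s\<^sup>2)) \<le> 1 * 2"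
    using X pos by (intro mult_mono) (auto simp: divide_le_eq)
  then have "\<gamma> * ?L powr (\<gamma> - 1) * ((1 / ?X) * (2 * s\<^sup>2 / (10 + s\<^sup>2)))
      \<le> \<gamma> * ?L powr (\<gamma> - 1) * 2"
    using \<gamma> by (intro mult_left_mono) auto
  moreover have "\<bar>loglog_weight_deriv \<gamma> s\<bar> * s
      = \<gamma> * ?L powr (\<gamma> - 1) * ((1 / ?X) * (2 * s\<^sup>2 / (10 + s\<^sup>2)))"
    using X \<open>0 < s\<close> pos \<gamma> by (simp add: loglog_weight_deriv_def abs_mult power2_eq_square)
  ultimately show ?thesis by simp
qed

lemma loglog_weight_deriv_le:
  assumes \<gamma>: "0 < \<gamma>" and \<epsilon>: "0 < \<epsilon>"
  shows "\<exists>K>0. \<forall>s>0. \<bar>loglog_weight_deriv \<gamma> s\<bar> * s \<le> K * (1 + s powr \<epsilon>)"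
proof (cases "\<gamma> \<le> 1")
  case True
  define K where "K = 2 * \<gamma> * ln (ln (10::real)) powr (\<gamma> - 1)"
  have "ln (ln (10 + s\<^sup>2)) powr (\<gamma> - 1) \<le> ln (ln (10::real)) powr (\<gamma> - 1)" for s
    using True ln_ln_10_plus_sq_bounds[of 0] ln_ln_10_plus_sq_bounds(3)[of s]
    by (intro powr_mono2') auto
  then have "2 * \<gamma> * ln (ln (10 + s\<^sup>2)) powr (\<gamma> - 1) \<le> K" for s
    using \<gamma> unfolding K_def by (intro mult_left_mono) auto
  moreover have "0 < K" using \<gamma> ln_ln_10_plus_sq_bounds(1)[of 0] by (simp add: K_def)
  ultimately have "\<bar>loglog_weight_deriv \<gamma> s\<bar> * s \<le> K * (1 + s powr \<epsilon>)" if "0 < s" for s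
    using abs_loglog_weight_deriv_mult_le[OF less_imp_le[OF \<gamma>] that]
    by (smt (verit) mult_le_cancel_left1 powr_ge_zero)
  with \<open>0 < K\<close> show ?thesis by blast
next
  case False
  obtain K where K: "0 < K" "\<forall>s\<ge>0. ln (10 + s\<^sup>2) powr (\<gamma> - 1) \<le> K * (1 + s powr \<epsilon>)"
    using ln_10_plus_sq_powr_le[of "\<gamma> - 1" \<epsilon>] False \<epsilon> by auto
  have "\<bar>loglog_weight_deriv \<gamma> s\<bar> * s \<le> (2 * \<gamma> * K) * (1 + s powr \<epsilon>)" if "0 < s" for s
  proof -
    have "ln (ln (10 + s\<^sup>2)) powr (\<gamma> - 1) \<le> ln (10 + s\<^sup>2) powr (\<gamma> - 1)"
      using False ln_ln_10_plus_sq_bounds[of s] ln_10_plus_sq_gt_one[of s]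
      by (intro powr_mono2) auto
    also have "\<dots> \<le> K * (1 + s powr \<epsilon>)" using K that by auto
    finally have "2 * \<gamma> * ln (ln (10 + s\<^sup>2)) powr (\<gamma> - 1) \<le> 2 * \<gamma> * (K * (1 + s powr \<epsilon>))"
      using \<gamma> by (intro mult_left_mono) auto
    then show ?thesis
      using abs_loglog_weight_deriv_mult_le[OF less_imp_le[OF \<gamma>] that] by (simp add: mult.assoc)
  qed
  then show ?thesis using K \<gamma> by (intro exI[of _ "2 * \<gamma> * K"]) auto
qed

lemma increment_powr_le:
  fixes d M \<beta> \<epsilon> :: real
  assumes d: "0 \<le> d" "d \<le> M" and \<beta>: "0 < \<beta>" "\<beta> + \<epsilon> \<le> 1" and \<epsilon>: "0 < \<epsilon>"
  shows "d * M powr (\<beta> - 1) * (1 + M powr \<epsilon>) \<le> d powr \<beta> + d powr (\<beta> + \<epsilon>)"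
proof (cases "d = 0")
  case False
  then have M: "0 < M" "0 < d" using d by auto
  define t where "t = d / M"
  have t: "0 < t" "t \<le> 1" using d M by (auto simp: t_def)
  have d_eq: "d * M powr (\<beta> - 1) = d powr \<beta> * t powr (1 - \<beta>)"
    using M by (simp add: t_def powr_divide powr_diff field_simps flip: powr_add)
  have "t powr (1 - \<beta>) \<le> 1" using t \<beta> \<epsilon> by (intro powr_le1) auto
  moreover have "t powr (1 - \<beta>) * M powr \<epsilon> \<le> d powr \<epsilon>"
  proof -
    have "t powr (1 - \<beta>) \<le> t powr \<epsilon>" using t \<beta> by (intro powr_mono') auto
    then have "t powr (1 - \<beta>) * M powr \<epsilon> \<le> t powr \<epsilon> * M powr \<epsilon>" by (intro mult_right_mono) auto
    also have "\<dots> = d powr \<epsilon>" using M by (simp add: t_def powr_divide)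
    finally show ?thesis .
  qed
  ultimately have "d powr \<beta> * t powr (1 - \<beta>) + d powr \<beta> * (t powr (1 - \<beta>) * M powr \<epsilon>)
      \<le> d powr \<beta> * 1 + d powr \<beta> * d powr \<epsilon>"
    by (intro add_mono mult_left_mono) auto
  then show ?thesis by (simp add: d_eq algebra_simps powr_add)
qed simp

lemma powr_le_of_le_mult_add:
  fixes x u v K r :: real
  assumes "0 \<le> x" "0 \<le> u" "0 \<le> v" "0 \<le> K" "0 \<le> r" "x \<le> K * (u + v)"
  shows "x powr r \<le> (2 * K) powr r * (u powr r + v powr r)"
proof -
  have "x powr r \<le> (K * (2 * max u v)) powr r"
    using assms by (intro powr_mono2 order_trans[OF \<open>x \<le> K * (u + v)\<close>] mult_left_mono) auto
  also have "\<dots> = (2 * K) powr r * max u v powr r"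
    using assms by (simp add: powr_mult mult_ac)
  also have "\<dots> \<le> (2 * K) powr r * (u powr r + v powr r)"
    by (intro mult_left_mono) (auto simp: max_def)
  finally show ?thesis .
qed

lemma norm_diff_le_away_from_zero:
  fixes H :: "'a::real_normed_vector \<Rightarrow> 'b::real_normed_vector" and H' :: "'a \<Rightarrow> 'a \<Rightarrow>\<^sub>L 'b"
  assumes H_deriv: "\<And>z. z \<noteq> 0 \<Longrightarrow> (H has_derivative blinfun_apply (H' z)) (at z)"
    and H'_le: "\<And>z. z \<noteq> 0 \<Longrightarrow> norm (H' z) \<le> c * norm z powr (\<beta> - 1)"
    and "0 \<le> c" "\<beta> \<le> 1" and far: "2 * norm (a - b) < norm a"
  shows "norm (H a - H b) \<le> c * (norm a / 2) powr (\<beta> - 1) * norm (a - b)"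
proof (rule differentiable_bound[of "closed_segment b a"])
  fix z assume z: "z \<in> closed_segment b a"
  have "norm (z - a) \<le> norm (a - b)"
    using segment_bound(2)[OF z] by simp
  then have z_large: "norm a / 2 \<le> norm z"
    using far norm_triangle_ineq2[of a "a - z"] by (simp add: norm_minus_commute)
  then have "z \<noteq> 0" using far by auto
  then show "(H has_derivative blinfun_apply (H' z)) (at z within closed_segment b a)"
    using H_deriv has_derivative_at_withinI by blast
  have "onorm (blinfun_apply (H' z)) \<le> c * norm z powr (\<beta> - 1)"
    using H'_le[OF \<open>z \<noteq> 0\<close>] by (simp add: norm_blinfun.rep_eq)
  also have "\<dots> \<le> c * (norm a / 2) powr (\<beta> - 1)"
    using assms z_large by (intro mult_left_mono powr_mono2') auto
  finally show "onorm (blinfun_apply (H' z)) \<le> c * (norm a / 2) powr (\<beta> - 1)" .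
qed auto

lemma abs_diff_le_by_scaled_derivative:
  fixes g g' :: "real \<Rightarrow> real"
  assumes g_deriv: "\<And>z. 0 < z \<Longrightarrow> (g has_real_derivative g' z) (at z)"
    and g'_le: "\<And>z. 0 < z \<Longrightarrow> \<bar>g' z\<bar> * z \<le> Kd * (1 + z powr \<epsilon>)"
    and "0 \<le> Kd" "0 \<le> \<epsilon>" "0 < m" "m \<le> M" "M \<le> 2 * m"
  shows "\<bar>g M - g m\<bar> \<le> (M - m) * (2 * Kd * (1 + M powr \<epsilon>) / M)"
proof (cases "m = M")
  case False
  then have "m < M" using assms by simp
  then obtain z where z: "m < z" "z < M" "g M - g m = (M - m) * g' z"
    using MVT2[of m M g g'] g_deriv \<open>0 < m\<close> by force
  have "\<bar>g' z\<bar> * (M / 2) \<le> \<bar>g' z\<bar> * z"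
    using z assms by (intro mult_left_mono) auto
  also have "\<dots> \<le> Kd * (1 + M powr \<epsilon>)"
    using g'_le[of z] z assms powr_mono2[of \<epsilon> z M] by (smt (verit) mult_left_mono)
  finally have "\<bar>g' z\<bar> \<le> 2 * Kd * (1 + M powr \<epsilon>) / M"
    using assms by (simp add: field_simps)
  then have "(M - m) * \<bar>g' z\<bar> \<le> (M - m) * (2 * Kd * (1 + M powr \<epsilon>) / M)"
    using \<open>m < M\<close> by (intro mult_left_mono) auto
  then show ?thesis using z \<open>m < M\<close> by (simp add: abs_mult)
qed (use assms in simp)

lemma weighted_diff_le_near:
  fixes H :: "complex \<Rightarrow> complex" and g :: "real \<Rightarrow> real"
  assumes \<beta>: "0 \<le> \<beta>" "0 \<le> \<epsilon>" "\<beta> + \<epsilon> \<le> 1"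
    and H_le: "\<And>z. cmod (H z) \<le> c2 * cmod z powr \<beta>" and "0 \<le> c2"
    and g_le: "\<And>s. 0 \<le> s \<Longrightarrow> 0 \<le> g s \<and> g s \<le> Kg * (1 + s powr \<epsilon>)" and "0 \<le> Kg"
    and ba: "cmod b \<le> cmod a" and near: "cmod a \<le> 2 * cmod (a - b)"
  shows "cmod (H a * of_real (g (cmod a)) - H b * of_real (g (cmod b)))
    \<le> 4 * c2 * Kg * (cmod (a - b) powr \<beta> + cmod (a - b) powr (\<beta> + \<epsilon>))"
proof -
  define \<Phi> where "\<Phi> x = x powr \<beta> + x powr (\<beta> + \<epsilon>)" for x :: real
  have \<Phi>_mono: "\<Phi> x \<le> \<Phi> y" if "0 \<le> x" "x \<le> y" for x y
    unfolding \<Phi>_def using that \<beta> by (intro add_mono powr_mono2) auto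
  have \<Phi>_double: "\<Phi> (2 * x) \<le> 2 * \<Phi> x" if "0 \<le> x" for x
  proof -
    have "2 powr \<beta> \<le> 2" "2 powr (\<beta> + \<epsilon>) \<le> (2::real)"
      using \<beta> powr_mono[of _ 1 "2::real"] by auto
    then show ?thesis
      unfolding \<Phi>_def using that by (simp add: powr_mult distrib_left mult_right_mono add_mono)
  qed
  have F_le: "cmod (H z * of_real (g (cmod z))) \<le> c2 * Kg * \<Phi> (cmod z)" for z
  proof -
    have g: "0 \<le> g (cmod z)" "g (cmod z) \<le> Kg * (1 + cmod z powr \<epsilon>)" using g_le[of "cmod z"] by auto
    then have "cmod (H z * of_real (g (cmod z))) \<le> (c2 * cmod z powr \<beta>) * (Kg * (1 + cmod z powr \<epsilon>))"
      using H_le[of z] \<open>0 \<le> c2\<close> by (simp add: norm_mult mult_mono)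
    also have "\<dots> = c2 * Kg * \<Phi> (cmod z)"
      by (simp add: \<Phi>_def powr_add algebra_simps)
    finally show ?thesis .
  qed
  have "\<Phi> (cmod b) \<le> \<Phi> (2 * cmod (a - b))" "\<Phi> (cmod a) \<le> \<Phi> (2 * cmod (a - b))"
    using \<Phi>_mono ba near by (meson norm_ge_zero order_trans)+
  then have \<Phi>_le: "c2 * Kg * \<Phi> (cmod b) \<le> c2 * Kg * \<Phi> (2 * cmod (a - b))"
      "c2 * Kg * \<Phi> (cmod a) \<le> c2 * Kg * \<Phi> (2 * cmod (a - b))"
    using assms by (simp_all add: mult_left_mono)
  have "cmod (H a * of_real (g (cmod a)) - H b * of_real (g (cmod b)))
      \<le> cmod (H a * of_real (g (cmod a))) + cmod (H b * of_real (g (cmod b)))"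
    by (rule norm_triangle_ineq4)
  also have "\<dots> \<le> 2 * (c2 * Kg) * \<Phi> (2 * cmod (a - b))"
    using F_le[of a] F_le[of b] \<Phi>_le by linarith
  also have "\<dots> \<le> 2 * (c2 * Kg) * (2 * \<Phi> (cmod (a - b)))"
    using \<Phi>_double assms by (intro mult_left_mono) auto
  finally show ?thesis by (simp add: \<Phi>_def algebra_simps)
qed

lemma weighted_diff_le_far:
  fixes H :: "complex \<Rightarrow> complex" and H' :: "complex \<Rightarrow> complex \<Rightarrow>\<^sub>L complex"
    and g g' :: "real \<Rightarrow> real"
  assumes \<beta>: "0 < \<beta>" "0 < \<epsilon>" "\<beta> + \<epsilon> \<le> 1"
    and H_le: "\<And>z. cmod (H z) \<le> c2 * cmod z powr \<beta>" and "0 \<le> c2"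
    and H_deriv: "\<And>z. z \<noteq> 0 \<Longrightarrow> (H has_derivative blinfun_apply (H' z)) (at z)"
    and H'_le: "\<And>z. z \<noteq> 0 \<Longrightarrow> norm (H' z) \<le> c3 * cmod z powr (\<beta> - 1)" and "0 \<le> c3"
    and g_le: "\<And>s. 0 \<le> s \<Longrightarrow> 0 \<le> g s \<and> g s \<le> Kg * (1 + s powr \<epsilon>)" and "0 \<le> Kg"
    and g_deriv: "\<And>z. 0 < z \<Longrightarrow> (g has_real_derivative g' z) (at z)"
    and g'_le: "\<And>z. 0 < z \<Longrightarrow> \<bar>g' z\<bar> * z \<le> Kd * (1 + z powr \<epsilon>)" and "0 \<le> Kd"
    and ba: "cmod b \<le> cmod a" and far: "2 * cmod (a - b) < cmod a"
  shows "cmod (H a * of_real (g (cmod a)) - H b * of_real (g (cmod b)))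
    \<le> (c3 * 2 powr (1 - \<beta>) * Kg + 2 * c2 * Kd) * (cmod (a - b) powr \<beta> + cmod (a - b) powr (\<beta> + \<epsilon>))"
proof -
  define M m d where "M = cmod a" and "m = cmod b" and "d = cmod (a - b)"
  have M: "0 < M" "d \<le> M" using far norm_ge_zero[of "a - b"] unfolding M_def d_def by linarith+
  have mM: "M - m \<le> d" "m \<le> M" "M \<le> 2 * m" "0 < m"
    using norm_triangle_ineq2[of a b] ba far by (auto simp: M_def m_def d_def)
  have gM: "0 \<le> g M" "g M \<le> Kg * (1 + M powr \<epsilon>)" using g_le[of M] M by auto
  have H_diff: "cmod (H a - H b) \<le> c3 * (M / 2) powr (\<beta> - 1) * d"
    unfolding M_def d_def using assms by (intro norm_diff_le_away_from_zero) auto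
  have g_diff: "\<bar>g M - g m\<bar> \<le> d * (2 * Kd * (1 + M powr \<epsilon>) / M)"
  proof -
    have "\<bar>g M - g m\<bar> \<le> (M - m) * (2 * Kd * (1 + M powr \<epsilon>) / M)"
      using mM assms by (intro abs_diff_le_by_scaled_derivative[OF g_deriv g'_le]) auto
    also have "\<dots> \<le> d * (2 * Kd * (1 + M powr \<epsilon>) / M)"
      using mM M \<open>0 \<le> Kd\<close> by (intro mult_right_mono) auto
    finally show ?thesis .
  qed
  have Hb: "cmod (H b) \<le> c2 * M powr \<beta>"
    using H_le[of b] mM \<beta> \<open>0 \<le> c2\<close> powr_mono2[of \<beta> m M]
    by (smt (verit, best) m_def mult_left_mono norm_ge_zero)
  have "H a * of_real (g (cmod a)) - H b * of_real (g (cmod b))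
      = (H a - H b) * of_real (g M) + H b * of_real (g M - g m)"
    by (simp add: M_def m_def algebra_simps)
  then have "cmod (H a * of_real (g (cmod a)) - H b * of_real (g (cmod b)))
      \<le> cmod (H a - H b) * g M + cmod (H b) * \<bar>g M - g m\<bar>"
    using gM norm_triangle_ineq[of "(H a - H b) * of_real (g M)" "H b * of_real (g M - g m)"]
    by (simp add: norm_mult flip: of_real_diff)
  also have "\<dots> \<le> (c3 * (M / 2) powr (\<beta> - 1) * d) * (Kg * (1 + M powr \<epsilon>))
      + (c2 * M powr \<beta>) * (d * (2 * Kd * (1 + M powr \<epsilon>) / M))"
    using H_diff gM g_diff Hb assms by (intro add_mono mult_mono) (auto simp: d_def)
  also have "\<dots> = (c3 * 2 powr (1 - \<beta>) * Kg + 2 * c2 * Kd) * (d * M powr (\<beta> - 1) * (1 + M powr \<epsilon>))"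
    using M by (simp add: powr_divide powr_diff powr_minus_divide field_simps)
  also have "\<dots> \<le> (c3 * 2 powr (1 - \<beta>) * Kg + 2 * c2 * Kd) * (d powr \<beta> + d powr (\<beta> + \<epsilon>))"
    using M \<beta> assms by (intro mult_left_mono increment_powr_le) (auto simp: d_def)
  finally show ?thesis by (simp add: d_def)
qed

lemma weighted_diff_le:
  fixes H :: "complex \<Rightarrow> complex" and H' :: "complex \<Rightarrow> complex \<Rightarrow>\<^sub>L complex"
    and g g' :: "real \<Rightarrow> real"
  assumes \<beta>: "0 < \<beta>" "0 < \<epsilon>" "\<beta> + \<epsilon> \<le> 1"
    and H_le: "\<And>z. cmod (H z) \<le> c2 * cmod z powr \<beta>" and "0 \<le> c2"
    and H_deriv: "\<And>z. z \<noteq> 0 \<Longrightarrow> (H has_derivative blinfun_apply (H' z)) (at z)"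
    and H'_le: "\<And>z. z \<noteq> 0 \<Longrightarrow> norm (H' z) \<le> c3 * cmod z powr (\<beta> - 1)" and "0 \<le> c3"
    and g_le: "\<And>s. 0 \<le> s \<Longrightarrow> 0 \<le> g s \<and> g s \<le> Kg * (1 + s powr \<epsilon>)" and "0 \<le> Kg"
    and g_deriv: "\<And>z. 0 < z \<Longrightarrow> (g has_real_derivative g' z) (at z)"
    and g'_le: "\<And>z. 0 < z \<Longrightarrow> \<bar>g' z\<bar> * z \<le> Kd * (1 + z powr \<epsilon>)" and "0 \<le> Kd"
  shows "cmod (H a * of_real (g (cmod a)) - H b * of_real (g (cmod b)))
    \<le> (4 * c2 * Kg + c3 * 2 powr (1 - \<beta>) * Kg + 2 * c2 * Kd)
        * (cmod (a - b) powr \<beta> + cmod (a - b) powr (\<beta> + \<epsilon>))"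
proof -
  define K where "K = 4 * c2 * Kg + c3 * 2 powr (1 - \<beta>) * Kg + 2 * c2 * Kd"
  let ?F = "\<lambda>z. H z * of_real (g (cmod z))"
  let ?\<Phi> = "\<lambda>a b. cmod (a - b) powr \<beta> + cmod (a - b) powr (\<beta> + \<epsilon>)"
  have ordered: "cmod (?F a - ?F b) \<le> K * ?\<Phi> a b" if ba: "cmod b \<le> cmod a" for a b
  proof (cases "cmod a \<le> 2 * cmod (a - b)")
    case True
    then have "cmod (?F a - ?F b) \<le> 4 * c2 * Kg * ?\<Phi> a b"
      using assms by (intro weighted_diff_le_near[OF _ _ _ H_le _ g_le _ ba]) auto
    also have "\<dots> \<le> K * ?\<Phi> a b"
      using assms by (intro mult_right_mono) (auto simp: K_def)
    finally show ?thesis .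
  next
    case False
    then have "cmod (?F a - ?F b) \<le> (c3 * 2 powr (1 - \<beta>) * Kg + 2 * c2 * Kd) * ?\<Phi> a b"
      using assms
      by (intro weighted_diff_le_far[OF \<beta> H_le _ H_deriv H'_le _ g_le _ g_deriv g'_le _ ba]) auto
    also have "\<dots> \<le> K * ?\<Phi> a b"
      using assms by (intro mult_right_mono) (auto simp: K_def)
    finally show ?thesis .
  qed
  show ?thesis
    using ordered[of b a] ordered[of a b] unfolding K_def
    by (cases "cmod b \<le> cmod a") (auto simp: norm_minus_commute)
qed

lemma loglog_weighted_diff_le:
  fixes H :: "complex \<Rightarrow> complex" and H' :: "complex \<Rightarrow> complex \<Rightarrow>\<^sub>L complex"
  assumes \<beta>: "0 < \<beta>" "0 < \<epsilon>" "\<beta> + \<epsilon> \<le> 1" and \<gamma>: "0 < \<gamma>"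
    and H_le: "\<And>z. cmod (H z) \<le> c2 * cmod z powr \<beta>" and "0 < c2"
    and H_deriv: "\<And>z. z \<noteq> 0 \<Longrightarrow> (H has_derivative blinfun_apply (H' z)) (at z)"
    and H'_le: "\<And>z. z \<noteq> 0 \<Longrightarrow> norm (H' z) \<le> c3 * cmod z powr (\<beta> - 1)" and "0 \<le> c3"
  shows "\<exists>K>0. \<forall>a b.
    cmod (H a * of_real (loglog_weight \<gamma> (cmod a)) - H b * of_real (loglog_weight \<gamma> (cmod b)))
      \<le> K * (cmod (a - b) powr \<beta> + cmod (a - b) powr (\<beta> + \<epsilon>))"
proof -
  obtain Kg where Kg: "0 < Kg" "\<forall>s\<ge>0. loglog_weight \<gamma> s \<le> Kg * (1 + s powr \<epsilon>)"
    using loglog_weight_le[OF \<gamma> \<open>0 < \<epsilon>\<close>] by blast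
  obtain Kd where Kd: "0 < Kd" "\<forall>s>0. \<bar>loglog_weight_deriv \<gamma> s\<bar> * s \<le> Kd * (1 + s powr \<epsilon>)"
    using loglog_weight_deriv_le[OF \<gamma> \<open>0 < \<epsilon>\<close>] by blast
  define K where "K = 4 * c2 * Kg + c3 * 2 powr (1 - \<beta>) * Kg + 2 * c2 * Kd"
  have "cmod (H a * of_real (loglog_weight \<gamma> (cmod a)) - H b * of_real (loglog_weight \<gamma> (cmod b)))
      \<le> K * (cmod (a - b) powr \<beta> + cmod (a - b) powr (\<beta> + \<epsilon>))" for a b
    unfolding K_def
    using Kg Kd \<open>0 < c2\<close> \<open>0 \<le> c3\<close> loglog_weight_nonneg
    by (intro weighted_diff_le[OF \<beta> H_le _ H_deriv H'_le _ _ _ loglog_weight_has_real_derivative])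
      auto
  moreover have "0 < K" using Kg Kd assms by (simp add: K_def add_pos_nonneg)
  ultimately show ?thesis by blast
qed

lemma continuous_on_of_norm_diff_le_powr:
  fixes F :: "'a::real_normed_vector \<Rightarrow> 'b::real_normed_vector"
  assumes "0 < p" "0 < q"
    and F_diff: "\<And>a b. norm (F a - F b) \<le> K * (norm (a - b) powr p + norm (a - b) powr q)"
  shows "continuous_on UNIV F"
proof -
  have "isCont F z" for z
  proof -
    have "((\<lambda>w. norm (w - z)) \<longlongrightarrow> 0) (at z)"
      by (intro tendsto_eq_intros) (auto intro!: tendsto_ident_at)
    then have "((\<lambda>w. K * (norm (w - z) powr p + norm (w - z) powr q)) \<longlongrightarrow> 0) (at z)"
      using assms by (auto intro!: tendsto_zero_powrI tendsto_add_zero tendsto_mult_right_zero)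
    then have "((\<lambda>w. F w - F z) \<longlongrightarrow> 0) (at z)"
      by (rule Lim_null_comparison[rotated]) (use F_diff in auto)
    then show ?thesis by (simp add: isCont_def LIM_zero_iff)
  qed
  then show ?thesis by (simp add: continuous_at_imp_continuous_on)
qed

lemma besov_pow_comp_le:
  fixes F :: "complex \<Rightarrow> complex" and f :: "'n::euclidean_space \<Rightarrow> complex"
  assumes f: "f \<in> borel_measurable lborel" and Ff: "(\<lambda>x. F (f x)) \<in> borel_measurable lborel"
    and "0 \<le> K"
    and F_diff: "\<And>a b. cmod (F a - F b) powr r \<le> K * (cmod (a - b) powr p + cmod (a - b) powr q)"
    and "s * r = s1 * p" "s * r = s2 * q"
  shows "besov_pow s r (\<lambda>x. F (f x)) \<le> ennreal K * (besov_pow s1 p f + besov_pow s2 q f)"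
proof -
  define I where "I t g h = (\<integral>\<^sup>+ x. ennreal (cmod (g (x + h) - g x) powr t) \<partial>lborel)"
    for t and g :: "'n \<Rightarrow> complex" and h
  define W where "W h = ennreal (norm h powr (real DIM('n) + s * r))" for h :: 'n
  have I_meas: "(\<lambda>h. I t f h) \<in> borel_measurable lborel" for t
  proof -
    have "(\<lambda>(h, x). ennreal (cmod (f (x + h) - f x) powr t)) \<in> borel_measurable (lborel \<Otimes>\<^sub>M lborel)"
      using f by measurable
    then show ?thesis unfolding I_def by (rule lborel.borel_measurable_nn_integral)
  qed
  have W_meas: "W \<in> borel_measurable lborel" unfolding W_def by measurable
  have I_le: "I r (\<lambda>x. F (f x)) h \<le> ennreal K * (I p f h + I q f h)" for h
  proof -
    have "I r (\<lambda>x. F (f x)) h \<le> (\<integral>\<^sup>+ x. ennreal K * (ennreal (cmod (f (x + h) - f x) powr p)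
        + ennreal (cmod (f (x + h) - f x) powr q)) \<partial>lborel)"
      unfolding I_def using F_diff \<open>0 \<le> K\<close>
      by (intro nn_integral_mono) (simp add: ennreal_mult[symmetric] ennreal_plus[symmetric] del: ennreal_plus)
    also have "\<dots> = ennreal K * (I p f h + I q f h)"
      using f by (simp add: nn_integral_cmult nn_integral_add I_def)
    finally show ?thesis .
  qed
  have "besov_pow s r (\<lambda>x. F (f x)) = (\<integral>\<^sup>+ h. I r (\<lambda>x. F (f x)) h / W h \<partial>lborel)"
    unfolding besov_pow_def I_def W_def ..
  also have "\<dots> \<le> (\<integral>\<^sup>+ h. ennreal K * (I p f h / W h) + ennreal K * (I q f h / W h) \<partial>lborel)"
  proof (rule nn_integral_mono)
    fix h
    have "I r (\<lambda>x. F (f x)) h / W h \<le> ennreal K * (I p f h + I q f h) / W h"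
      using I_le[of h] by (simp add: divide_ennreal_def mult_right_mono)
    then show "I r (\<lambda>x. F (f x)) h / W h \<le> ennreal K * (I p f h / W h) + ennreal K * (I q f h / W h)"
      by (simp add: divide_ennreal_def algebra_simps)
  qed
  also have "\<dots> = ennreal K * ((\<integral>\<^sup>+ h. I p f h / W h \<partial>lborel) + (\<integral>\<^sup>+ h. I q f h / W h \<partial>lborel))"
    using I_meas W_meas by (simp add: nn_integral_cmult nn_integral_add distrib_left)
  also have "(\<integral>\<^sup>+ h. I p f h / W h \<partial>lborel) = besov_pow s1 p f"
    unfolding besov_pow_def I_def W_def assms(5) ..
  also have "(\<integral>\<^sup>+ h. I q f h / W h \<partial>lborel) = besov_pow s2 q f"
    unfolding besov_pow_def I_def W_def assms(6) ..
  finally show ?thesis .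
qed

lemma enn_powr_le_mult_add:
  fixes P A B :: ennreal
  assumes P: "P \<le> ennreal K * (A + B)" and "0 < K" "0 \<le> q"
  shows "enn_powr P q \<le> ennreal ((2 * K) powr q) * (enn_powr A q + enn_powr B q)"
proof (cases "A = \<infinity> \<or> B = \<infinity>")
  case True
  then have "ennreal ((2 * K) powr q) * (enn_powr A q + enn_powr B q) = top"
    using \<open>0 < K\<close> by (auto simp: enn_powr_def ennreal_mult_eq_top_iff)
  then show ?thesis by simp
next
  case False
  then obtain a b where ab: "A = ennreal a" "B = ennreal b" "0 \<le> a" "0 \<le> b"
    by (cases A; cases B) auto
  then have P_le: "P \<le> ennreal (K * (a + b))"
    using P \<open>0 < K\<close> by (simp add: ennreal_mult ennreal_plus[symmetric] del: ennreal_plus)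
  then obtain x where x: "P = ennreal x" "0 \<le> x" "x \<le> K * (a + b)"
    using ab \<open>0 < K\<close> by (cases P) (auto simp: ennreal_le_iff top_unique)
  then have "x powr q \<le> (2 * K) powr q * (a powr q + b powr q)"
    using ab assms by (intro powr_le_of_le_mult_add) auto
  then show ?thesis
    using x ab by (simp add: enn_powr_def ennreal_mult[symmetric] ennreal_plus[symmetric] del: ennreal_plus)
qed

lemma enn_powr_enn_powr:
  assumes "0 < t" "0 < r"
  shows "enn_powr (enn_powr A (1 / (t * r))) t = enn_powr A (1 / r)"
  using assms by (cases "A = \<infinity>") (auto simp: enn_powr_def powr_powr)

lemma besov_norm_comp_le:
  fixes F :: "complex \<Rightarrow> complex" and f :: "'n::euclidean_space \<Rightarrow> complex"
  assumes f: "f \<in> borel_measurable lborel" and "0 < p" "0 < q" "0 < r" "0 < K"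
    and F_diff: "\<And>a b. cmod (F a - F b) \<le> K * (cmod (a - b) powr p + cmod (a - b) powr q)"
  shows "besov_norm s r (\<lambda>x. F (f x)) \<le> ennreal ((2 * (2 * K) powr r) powr (1 / r))
    * (enn_powr (besov_norm (s / p) (p * r) f) p + enn_powr (besov_norm (s / q) (q * r) f) q)"
proof -
  have "continuous_on UNIV F"
    using assms by (intro continuous_on_of_norm_diff_le_powr[OF \<open>0 < p\<close> \<open>0 < q\<close>]) auto
  then have Ff: "(\<lambda>x. F (f x)) \<in> borel_measurable lborel"
    using f by (intro measurable_compose[OF f] borel_measurable_continuous_onI)
  have "cmod (F a - F b) powr r
      \<le> (2 * K) powr r * (cmod (a - b) powr (p * r) + cmod (a - b) powr (q * r))" for a b
    using powr_le_of_le_mult_add[OF _ _ _ _ _ F_diff[of a b]] assms by (simp add: powr_powr)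
  then have "besov_pow s r (\<lambda>x. F (f x))
      \<le> ennreal ((2 * K) powr r) * (besov_pow (s / p) (p * r) f + besov_pow (s / q) (q * r) f)"
    using assms by (intro besov_pow_comp_le[OF f Ff]) auto
  then have "enn_powr (besov_pow s r (\<lambda>x. F (f x))) (1 / r)
      \<le> ennreal ((2 * (2 * K) powr r) powr (1 / r))
        * (enn_powr (besov_pow (s / p) (p * r) f) (1 / r) + enn_powr (besov_pow (s / q) (q * r) f) (1 / r))"
    using assms by (intro enn_powr_le_mult_add) auto
  moreover have "enn_powr (besov_norm (s / t) (t * r) f) t = enn_powr (besov_pow (s / t) (t * r) f) (1 / r)"
    if "0 < t" for t
    unfolding besov_norm_def using that \<open>0 < r\<close> by (rule enn_powr_enn_powr)
  ultimately show ?thesis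
    using \<open>0 < p\<close> \<open>0 < q\<close> by (simp add: besov_norm_def[of s r])
qed

theorem mainTheorem9:
  fixes \<alpha> \<beta> r \<gamma> :: real
    and H :: "complex \<Rightarrow> complex"
    and H' :: "complex \<Rightarrow> complex \<Rightarrow>\<^sub>L complex"
  assumes "0 < \<alpha>" "\<alpha> < \<beta>" "\<beta> < 1" "r * \<beta> \<ge> 1" "0 < \<gamma>"
    and holder: "\<exists>C. \<forall>z w. cmod (H z - H w) \<le> C * cmod (z - w) powr \<beta>"
    and deriv: "\<And>z. z \<noteq> 0 \<Longrightarrow> (H has_derivative blinfun_apply (H' z)) (at z)"
    and cont_deriv: "continuous_on (UNIV - {0}) H'"
    and size_H: "\<exists>c1 c2. 0 < c1 \<and> 0 < c2 \<and>
        (\<forall>z. c1 * cmod z powr \<beta> \<le> cmod (H z) \<and> cmod (H z) \<le> c2 * cmod z powr \<beta>)"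
    and size_H': "\<exists>c1 c2. 0 < c1 \<and> 0 < c2 \<and>
        (\<forall>z. z \<noteq> 0 \<longrightarrow> c1 * cmod z powr (\<beta> - 1) \<le> norm (H' z) \<and>
                          norm (H' z) \<le> c2 * cmod z powr (\<beta> - 1))"
  shows "\<exists>\<epsilon>0 > 0. \<forall>\<epsilon>. 0 < \<epsilon> \<and> \<epsilon> < \<epsilon>0 \<longrightarrow>
          (\<exists>C::real. \<forall>f :: 'n::euclidean_space \<Rightarrow> complex. f \<in> borel_measurable lborel \<longrightarrow>
             besov_norm \<alpha> r (\<lambda>x. H (f x) * complex_of_real (loglog_weight \<gamma> (cmod (f x))))
             \<le> ennreal C * (enn_powr (besov_norm (\<alpha> / \<beta>) (\<beta> * r) f) \<beta>
                 + enn_powr (besov_norm (\<alpha> / (\<beta> + \<epsilon>)) ((\<beta> + \<epsilon>) * r) f) (\<beta> + \<epsilon>)))"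
proof -
  obtain c2 where "0 < c2" and H_le: "\<And>z. cmod (H z) \<le> c2 * cmod z powr \<beta>"
    using size_H by blast
  obtain c3 where "0 < c3" and H'_le: "\<And>z. z \<noteq> 0 \<Longrightarrow> norm (H' z) \<le> c3 * cmod z powr (\<beta> - 1)"
    using size_H' by blast
  have "0 < \<beta>" "0 < r"
    using assms(1-4) by (auto simp: zero_less_mult_iff dest: order_less_le_trans[OF zero_less_one])
  show ?thesis
  proof (rule exI[of _ "1 - \<beta>"], intro conjI allI impI)
    fix \<epsilon> assume "0 < \<epsilon> \<and> \<epsilon> < 1 - \<beta>"
    then obtain K where "0 < K" and F_diff: "\<And>a b.
        cmod (H a * of_real (loglog_weight \<gamma> (cmod a)) - H b * of_real (loglog_weight \<gamma> (cmod b)))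
          \<le> K * (cmod (a - b) powr \<beta> + cmod (a - b) powr (\<beta> + \<epsilon>))"
      using loglog_weighted_diff_le[OF \<open>0 < \<beta>\<close> _ _ \<open>0 < \<gamma>\<close> H_le \<open>0 < c2\<close> deriv H'_le] \<open>0 < c3\<close>
      by (metis add.commute less_diff_eq less_imp_le)
    show "\<exists>C. \<forall>f :: 'n \<Rightarrow> complex. f \<in> borel_measurable lborel \<longrightarrow>
        besov_norm \<alpha> r (\<lambda>x. H (f x) * complex_of_real (loglog_weight \<gamma> (cmod (f x))))
        \<le> ennreal C * (enn_powr (besov_norm (\<alpha> / \<beta>) (\<beta> * r) f) \<beta>
          + enn_powr (besov_norm (\<alpha> / (\<beta> + \<epsilon>)) ((\<beta> + \<epsilon>) * r) f) (\<beta> + \<epsilon>))"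
      using besov_norm_comp_le[OF _ \<open>0 < \<beta>\<close> _ \<open>0 < r\<close> \<open>0 < K\<close> F_diff] \<open>0 < \<beta>\<close> \<open>0 < \<epsilon> \<and> \<epsilon> < 1 - \<beta>\<close>
      by (intro exI[of _ "(2 * (2 * K) powr r) powr (1 / r)"]) auto
  qed (use \<open>\<beta> < 1\<close> in simp)
qed

end
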